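(* Let $\eta\in(0,1)$ and let $\mathbf{u}_T\in\mathbb{R}^{d_x}$, $\mathbf{v}_T\in\mathbb{R}^{d_y}$ be nonzero. If $\frac1{\sqrt2}\cdot\frac{\mathbf{u}^{*\top}\Sigma_{xx}\mathbf{u}_T+\mathbf{v}^{*\top}\Sigma_{yy}\mathbf{v}_T}{\sqrt{\mathbf{u}_T^\top\Sigma_{xx}\mathbf{u}_T+\mathbf{v}_T^\top\Sigma_{yy}\mathbf{v}_T}}\ge1-\frac\eta4,$ then $\mathrm{align}((\mathbf{u}_T,\mathbf{v}_T);(\mathbf{u}^*,\mathbf{v}^* ))=\frac12\Big(\frac{\mathbf{u}^{*\top}\Sigma_{xx}\mathbf{u}_T}{\sqrt{\mathbf{u}_T^\top\Sigma_{xx}\mathbf{u}_T}}+\frac{\mathbf{v}^{*\top}\Sigma_{yy}\mathbf{v}_T}{\sqrt{\mathbf{v}_T^\top\Sigma_{yy}\mathbf{v}_T}}\Big)\ge1-\eta.$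
   Context: $\Sigma_{xx}\in\mathbb{R}^{d_x\times d_x}$, $\Sigma_{yy}\in\mathbb{R}^{d_y\times d_y}$ are positive definite (population auto-covariances of zero-mean random vectors $\mathbf{x},\mathbf{y}$), $\Sigma_{xy}$ the cross-covariance, $\mathbf{T}=\Sigma_{xx}^{-1/2}\Sigma_{xy}\Sigma_{yy}^{-1/2}$ with unit top singular vector pair $(\mathbf{a}_1,\mathbf{b}_1)$, and $(\mathbf{u}^*,\mathbf{v}^* )=(\Sigma_{xx}^{-1/2}\mathbf{a}_1,\Sigma_{yy}^{-1/2}\mathbf{b}_1)$, so that $\mathbf{u}^{*\top}\Sigma_{xx}\mathbf{u}^*=\mathbf{v}^{*\top}\Sigma_{yy}\mathbf{v}^*=1$. *)

theory Defs
  imports "HOL-Analysis.Analysis"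
begin

definition pos_def_mat :: "real^'n^'n \<Rightarrow> bool" where
  "pos_def_mat M \<longleftrightarrow> transpose M = M \<and> (\<forall>x. x \<noteq> 0 \<longrightarrow> x \<bullet> (M *v x) > 0)"

definition is_inv_sqrt :: "real^'n^'n \<Rightarrow> real^'n^'n \<Rightarrow> bool" where
  "is_inv_sqrt S M \<longleftrightarrow> pos_def_mat S \<and> S ** S = matrix_inv M"

definition top_singular_pair :: "real^'m^'n \<Rightarrow> real^'n \<Rightarrow> real^'m \<Rightarrow> bool" where
  "top_singular_pair T a b \<longleftrightarrow> norm a = 1 \<and> norm b = 1 \<and>
     (\<forall>a' b'. norm a' = 1 \<longrightarrow> norm b' = 1 \<longrightarrow> a' \<bullet> (T *v b') \<le> a \<bullet> (T *v b))"

definition align :: "real^'n \<Rightarrow> real^'m \<Rightarrow> real^'n \<Rightarrow> real^'m \<Rightarrow> real^'n^'n \<Rightarrow> real^'m^'m \<Rightarrow> real" where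
  "align u v us vs Sxx Syy =
     (1/2) * ((us \<bullet> (Sxx *v u)) / sqrt (u \<bullet> (Sxx *v u))
            + (vs \<bullet> (Syy *v v)) / sqrt (v \<bullet> (Syy *v v)))"

end

theory Submission
  imports Defs
begin

text \<open>Write \<open>A = u\<^sub>T\<^sup>T \<Sigma>\<^sub>x\<^sub>x u\<^sub>T\<close>, \<open>B = v\<^sub>T\<^sup>T \<Sigma>\<^sub>y\<^sub>y v\<^sub>T\<close>, \<open>a = \<surd>A\<close>, \<open>b = \<surd>B\<close>, and let \<open>s\<close>, \<open>t\<close> be the
  cosines of the angles between \<open>u\<^sub>T\<close> and \<open>u\<^sup>*\<close>, resp. \<open>v\<^sub>T\<close> and \<open>v\<^sup>*\<close>, in the inner products
  given by the covariances. Since \<open>\<Sigma>\<^sup>-\<^sup>1\<^sup>/\<^sup>2\<close> maps unit vectors to vectors of unit \<open>\<Sigma>\<close>-norm,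
  Cauchy--Schwarz gives \<open>|s|, |t| \<le> 1\<close>. The hypothesis reads \<open>(s a + t b) / R \<ge> 1 - \<eta>/4\<close>
  with \<open>R = \<surd>2 \<surd>(a\<^sup>2 + b\<^sup>2)\<close>, and the conclusion is \<open>(s + t)/2 \<ge> 1 - \<eta>\<close>. As \<open>a + b \<le> R\<close>
  and \<open>a, b \<le> 3R/4\<close>, every unit of deficit \<open>1 - s\<close> or \<open>1 - t\<close> lowers \<open>s a + t b\<close> by at
  least \<open>R/8\<close> below \<open>R\<close>, which converts the first bound into the second.\<close>

lemma bilinear_corner_bound:
  fixes a b R x y :: real
  assumes "0 \<le> a" "0 \<le> b" "a + b \<le> R" "a \<le> 3*R/4" "b \<le> 3*R/4"
    and "0 \<le> x" "x \<le> 2" "0 \<le> y" "y \<le> 2"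
  shows "a + b - x*a - y*b \<le> R - R*(x+y)/8"
proof -
  text \<open>The difference of the two sides is bilinear in \<open>x, y\<close>; it is a combination of its
    (nonnegative) values at the four corners of \<open>[0,2]\<^sup>2\<close> with nonnegative weights.\<close>
  have "0 \<le> (2-x)*(2-y)*(R-a-b) + x*(2-y)*(3*R/4 + a - b)
            + (2-x)*y*(3*R/4 + b - a) + x*y*(R/2 + a + b)"
    using assms by (intro add_nonneg_nonneg mult_nonneg_nonneg) auto
  also have "\<dots> = 4*(R - R*(x+y)/8 - (a + b - x*a - y*b))"
    by (simp add: field_simps)
  finally show ?thesis by simp
qed

lemma mean_cosine_bound:
  fixes a b s t \<eta> :: real
  assumes "0 < a" "0 < b" "\<bar>s\<bar> \<le> 1" "\<bar>t\<bar> \<le> 1"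
    and hyp: "1 - \<eta>/4 \<le> (s*a + t*b) / (sqrt 2 * sqrt (a\<^sup>2 + b\<^sup>2))"
  shows "1 - \<eta> \<le> (s + t) / 2"
proof -
  define R where "R = sqrt 2 * sqrt (a\<^sup>2 + b\<^sup>2)"
  have R_pos: "0 < R" using assms by (simp add: R_def add_pos_pos)
  then have le_R: "x \<le> c * R" if "x\<^sup>2 \<le> (c * R)\<^sup>2" "0 \<le> c" for x c :: real
    using power2_le_imp_le[OF that(1)] that(2) by simp
  have R_sq: "R\<^sup>2 = 2*(a\<^sup>2 + b\<^sup>2)" by (simp add: R_def power_mult_distrib)
  have "(a + b)\<^sup>2 \<le> R\<^sup>2"
    unfolding power2_sum R_sq using sum_squares_bound[of a b] by (simp add: algebra_simps)
  then have sum_le: "a + b \<le> R" using le_R[of _ 1] by simp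
  have "(3/4 * R)\<^sup>2 = 9/8 * (a\<^sup>2 + b\<^sup>2)"
    unfolding power_mult_distrib R_sq by (simp add: power2_eq_square)
  then have "a \<le> 3*R/4" "b \<le> 3*R/4"
    using le_R[of a "3/4"] le_R[of b "3/4"] zero_le_power2[of a] zero_le_power2[of b] by auto
  then have "a + b - (1-s)*a - (1-t)*b \<le> R - R*((1-s) + (1-t))/8"
    using assms sum_le by (intro bilinear_corner_bound) (auto simp: abs_le_iff)
  moreover have "(1 - \<eta>/4) * R \<le> s*a + t*b"
    using hyp R_pos by (simp add: R_def pos_le_divide_eq)
  ultimately have "R * (2 - s - t) \<le> R * (2*\<eta>)"
    by (simp add: algebra_simps) (simp add: field_simps)
  then show ?thesis using R_pos by simp
qed

lemma normalized_mean_bound: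
  fixes A B p q \<eta> :: real
  assumes "0 < A" "0 < B" "p\<^sup>2 \<le> A" "q\<^sup>2 \<le> B"
    and hyp: "1 - \<eta>/4 \<le> (1 / sqrt 2) * ((p + q) / sqrt (A + B))"
  shows "1 - \<eta> \<le> (1/2) * (p / sqrt A + q / sqrt B)"
proof -
  have cosine_le_1: "\<bar>r / sqrt C\<bar> \<le> 1" if "0 < C" "r\<^sup>2 \<le> C" for r C :: real
    using real_sqrt_le_mono[OF \<open>r\<^sup>2 \<le> C\<close>] \<open>0 < C\<close> by (simp add: abs_divide divide_le_eq_1)
  have "1 - \<eta> \<le> (p / sqrt A + q / sqrt B) / 2"
  proof (rule mean_cosine_bound)
    show "1 - \<eta>/4 \<le> (p / sqrt A * sqrt A + q / sqrt B * sqrt B)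
                      / (sqrt 2 * sqrt ((sqrt A)\<^sup>2 + (sqrt B)\<^sup>2))"
      using hyp assms(1,2) by simp
  qed (use assms cosine_le_1 in auto)
  then show ?thesis by simp
qed

lemma symmetric_matrix_inner_commute:
  fixes M :: "real^'n^'n"
  assumes "transpose M = M"
  shows "x \<bullet> (M *v y) = y \<bullet> (M *v x)"
  by (metis assms dot_lmul_matrix inner_commute vector_transpose_matrix)

lemma pos_def_mat_cauchy_schwarz:
  fixes S :: "real^'n^'n"
  assumes "pos_def_mat S"
  shows "(w \<bullet> (S *v u))\<^sup>2 \<le> (w \<bullet> (S *v w)) * (u \<bullet> (S *v u))"
proof (cases "w = 0")
  case False
  have sym: "transpose S = S" and pd: "\<And>x. x \<noteq> 0 \<Longrightarrow> 0 < x \<bullet> (S *v x)"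
    using assms unfolding pos_def_mat_def by auto
  define W where "W = w \<bullet> (S *v w)"
  define c where "c = w \<bullet> (S *v u)"
  have W_pos: "0 < W" using pd[OF False] by (simp add: W_def)
  have "u \<bullet> (S *v w) = c" unfolding c_def by (rule symmetric_matrix_inner_commute[OF sym])
  then have "(W *\<^sub>R u - c *\<^sub>R w) \<bullet> (S *v (W *\<^sub>R u - c *\<^sub>R w)) = W * (W * (u \<bullet> (S *v u)) - c\<^sup>2)"
    by (simp add: matrix_vector_mult_diff_distrib matrix_vector_mult_scaleR inner_diff_left
        inner_diff_right c_def[symmetric] W_def[symmetric] power2_eq_square algebra_simps)
  moreover have "0 \<le> (W *\<^sub>R u - c *\<^sub>R w) \<bullet> (S *v (W *\<^sub>R u - c *\<^sub>R w))"
    using pd by (cases "W *\<^sub>R u - c *\<^sub>R w = 0") (auto intro: less_imp_le)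
  ultimately show ?thesis
    using W_pos by (simp add: W_def c_def zero_le_mult_iff)
qed simp

lemma pos_def_mat_invertible:
  fixes S :: "real^'n^'n"
  assumes "pos_def_mat S"
  shows "invertible S"
proof -
  have "\<forall>x. S *v x = 0 \<longrightarrow> x = 0"
    using assms unfolding pos_def_mat_def by force
  then show ?thesis
    by (simp add: matrix_left_invertible_ker invertible_left_inverse)
qed

lemma matrix_inv_mult_left:
  fixes S :: "real^'n^'n"
  assumes "invertible S"
  shows "matrix_inv S ** S = mat 1"
  using assms unfolding invertible_def matrix_inv_def by (rule someI2_ex) auto

lemma inv_sqrt_inner_congruence:
  fixes S H :: "real^'n^'n"
  assumes "pos_def_mat S" "is_inv_sqrt H S"
  shows "(H *v a) \<bullet> (S *v (H *v b)) = a \<bullet> b"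
proof -
  have HH: "H ** H = matrix_inv S" and H_sym: "transpose H = H"
    using assms(2) unfolding is_inv_sqrt_def pos_def_mat_def by auto
  have "H ** (H ** S) = mat 1"
    using matrix_inv_mult_left[OF pos_def_mat_invertible[OF assms(1)]] HH
    by (simp add: matrix_mul_assoc)
  then have HSH: "H ** S ** H = mat 1" by (simp add: matrix_left_right_inverse)
  have "(H *v a) \<bullet> (S *v (H *v b)) = a \<bullet> (H *v (S *v (H *v b)))"
    by (metis H_sym inner_commute symmetric_matrix_inner_commute)
  also have "\<dots> = a \<bullet> b"
    using HSH by (metis matrix_vector_mul_assoc matrix_vector_mul_lid)
  finally show ?thesis .
qed

theorem lemma9:
  fixes Sxx Hx :: "real^'n^'n" and Syy Hy :: "real^'m^'m" and Sxy :: "real^'m^'n"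
    and a1 uT :: "real^'n" and b1 vT :: "real^'m" and \<eta> :: real
  assumes "pos_def_mat Sxx" and "pos_def_mat Syy"
    and "is_inv_sqrt Hx Sxx" and "is_inv_sqrt Hy Syy"
    and "top_singular_pair (Hx ** Sxy ** Hy) a1 b1"
    and "0 < \<eta>" and "\<eta> < 1"
    and "uT \<noteq> 0" and "vT \<noteq> 0"
    and "(1 / sqrt 2) * (((Hx *v a1) \<bullet> (Sxx *v uT) + (Hy *v b1) \<bullet> (Syy *v vT))
           / sqrt (uT \<bullet> (Sxx *v uT) + vT \<bullet> (Syy *v vT))) \<ge> 1 - \<eta> / 4"
  shows "align uT vT (Hx *v a1) (Hy *v b1) Sxx Syy \<ge> 1 - \<eta>"
proof -
  have "a1 \<bullet> a1 = 1" "b1 \<bullet> b1 = 1"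
    using assms(5) unfolding top_singular_pair_def by (auto simp: dot_square_norm)
  then have "(Hx *v a1) \<bullet> (Sxx *v (Hx *v a1)) = 1" "(Hy *v b1) \<bullet> (Syy *v (Hy *v b1)) = 1"
    using inv_sqrt_inner_congruence assms(1-4) by metis+
  then have "((Hx *v a1) \<bullet> (Sxx *v uT))\<^sup>2 \<le> uT \<bullet> (Sxx *v uT)"
    and "((Hy *v b1) \<bullet> (Syy *v vT))\<^sup>2 \<le> vT \<bullet> (Syy *v vT)"
    using pos_def_mat_cauchy_schwarz assms(1,2) by (metis mult_1)+
  moreover have "0 < uT \<bullet> (Sxx *v uT)" "0 < vT \<bullet> (Syy *v vT)"
    using assms(1,2,8,9) unfolding pos_def_mat_def by auto
  ultimately show ?thesis
    unfolding align_def using assms(10) by (intro normalized_mean_bound) auto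
qed

end
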